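(* Let $\mathcal{T}$ be an $l$-eligible microdata table and run the three-phase algorithm described in the context (arbitrary tie-breaking). In each round of Phase Three, the pillar height $h(R)$ of the residue set increases by at most $l-2$.
   Context: A microdata table $\mathcal{T}$ is a multiset of $n$ tuples with values on $d$ quasi-identifier (QI) attributes and one sensitive attribute (SA). For a multiset $Q$ and SA value $v$, $h(Q,v)$ is the number of tuples in $Q$ with SA value $v$, $h(Q)=\max_v h(Q,v)$, pillars of $Q$ are the $v$ with $h(Q,v)=h(Q)$; $Q$ is $l$-eligible if $|Q|\ge l\cdot h(Q)$. Let $Q_1,\dots,Q_s$ be the maximal classes of tuples of $\mathcal{T}$ with identical values on all QI attributes; the algorithm only moves tuples from these groups into a residue set $R$ (initially empty), and terminates as soon as $R$ becomes $l$-eligible. Terminology (w.r.t. current state): a group $Q$ is thin if $|Q|=l\cdot h(Q)$, fat if $|Q|\ge l\cdot h(Q)+1$; conflicting if some pillar of $Q$ is a pillar of $R$ (its conflicting pillars, set $C(Q)$); dead if thin and conflicting, alive otherwise; an SA value $v$ is alive if some alive group $Q$ has $h(Q,v)>0$. Phase One: for each $i$, while $Q_i$ is not $l$-eligible, move a tuple of a pillar of $Q_i$ to $R$. Phase Two: repeat: if no SA value is alive, go to Phase Three; else pick an alive SA value $v$ minimizing $h(R,v)$ and an alive group $Q$ with $h(Q,v)>0$; if $Q$ is fat move one tuple with SA value $v$ to $R$, if thin move one tuple of each pillar of $Q$ to $R$. Phase Three proceeds in rounds. Step 1: let $P$ be the set of pillars of $R$ and $S=\emptyset$; while $P\ne\emptyset$,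 pick a group $Q$ minimizing $|C(Q)\cap P|$, add it to $S$, and set $P\leftarrow P\cap C(Q)$; then for each $Q\in S$ move one tuple of each pillar of $Q$ to $R$. Step 2: for each group $Q$ that is now alive, repeat until $Q$ is dead: if $Q$ is fat, move to $R$ a tuple of $Q$ whose SA value is not a pillar of $R$; if $Q$ is thin and non-conflicting, move one tuple of each pillar of $Q$ to $R$. All ties are broken arbitrarily. *)

theory Defs
  imports "HOL-Library.Multiset"
begin

text \<open>A multiset of SA values. h(Q,v) is count Q v.\<close>

definition hgt :: "'v multiset \<Rightarrow> nat" where
  "hgt Q = Max (range (count Q))"

definition pillars :: "'v multiset \<Rightarrow> 'v set" where
  "pillars Q = {v. count Q v = hgt Q}"

definition eligible :: "nat \<Rightarrow> 'v multiset \<Rightarrow> bool" where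
  "eligible l Q \<longleftrightarrow> size Q \<ge> l * hgt Q"

definition thin :: "nat \<Rightarrow> 'v multiset \<Rightarrow> bool" where
  "thin l Q \<longleftrightarrow> size Q = l * hgt Q"

definition fat :: "nat \<Rightarrow> 'v multiset \<Rightarrow> bool" where
  "fat l Q \<longleftrightarrow> size Q \<ge> l * hgt Q + 1"

definition cpill :: "'v multiset \<Rightarrow> 'v multiset \<Rightarrow> 'v set" where
  "cpill Q R = pillars Q \<inter> pillars R"

definition conflicting :: "'v multiset \<Rightarrow> 'v multiset \<Rightarrow> bool" where
  "conflicting Q R \<longleftrightarrow> cpill Q R \<noteq> {}"

definition dead :: "nat \<Rightarrow> 'v multiset \<Rightarrow> 'v multiset \<Rightarrow> bool" where
  "dead l Q R \<longleftrightarrow> thin l Q \<and> conflicting Q R"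

text \<open>A state is a pair (G, R): G q is the current group of tuples with QI value q
  (as multiset of SA values), R is the residue set (multiset of SA values).
  The groups of a state are the nonempty G q.\<close>

type_synonym ('q,'v) state = "('q \<Rightarrow> 'v multiset) \<times> 'v multiset"

definition grp :: "('q,'v) state \<Rightarrow> 'q \<Rightarrow> 'v multiset" where
  "grp st = fst st"

definition res :: "('q,'v) state \<Rightarrow> 'v multiset" where
  "res st = snd st"

definition groups :: "('q,'v) state \<Rightarrow> 'q set" where
  "groups st = {q. grp st q \<noteq> {#}}"

definition init_state :: "('q \<times> 'v) multiset \<Rightarrow> ('q,'v) state" where
  "init_state T = ((\<lambda>q. image_mset snd (filter_mset (\<lambda>t. fst t = q) T)), {#})"

definition mv :: "'q \<Rightarrow> 'v \<Rightarrow> ('q,'v) state \<Rightarrow> ('q,'v) state" where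
  "mv q v st = ((grp st)(q := grp st q - {#v#}), res st + {#v#})"

definition alive_grp :: "nat \<Rightarrow> ('q,'v) state \<Rightarrow> 'q \<Rightarrow> bool" where
  "alive_grp l st q \<longleftrightarrow> q \<in> groups st \<and> \<not> dead l (grp st q) (res st)"

definition alive_val :: "nat \<Rightarrow> ('q,'v) state \<Rightarrow> 'v \<Rightarrow> bool" where
  "alive_val l st v \<longleftrightarrow> (\<exists>q. alive_grp l st q \<and> count (grp st q) v > 0)"

text \<open>Moving a sequence of tuples one at a time, terminating (flag True) as soon as
  R becomes l-eligible.\<close>
inductive moves :: "nat \<Rightarrow> ('q,'v) state \<Rightarrow> ('q \<times> 'v) list \<Rightarrow> ('q,'v) state \<Rightarrow> bool \<Rightarrow> bool"
  for l where
  moves_nil: "moves l st [] st False"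
| moves_stop: "\<lbrakk> v \<in># grp st q; eligible l (res (mv q v st)) \<rbrakk>
     \<Longrightarrow> moves l st ((q,v) # ms) (mv q v st) True"
| moves_cont: "\<lbrakk> v \<in># grp st q; \<not> eligible l (res (mv q v st));
     moves l (mv q v st) ms st' b \<rbrakk>
     \<Longrightarrow> moves l st ((q,v) # ms) st' b"

definition pillar_list :: "'v multiset \<Rightarrow> 'v list \<Rightarrow> bool" where
  "pillar_list Q ps \<longleftrightarrow> distinct ps \<and> set ps = pillars Q"

inductive ph1_step :: "nat \<Rightarrow> ('q,'v) state \<Rightarrow> ('q,'v) state \<Rightarrow> bool" for l where
  "\<lbrakk> \<not> eligible l (grp st q); v \<in> pillars (grp st q) \<rbrakk> \<Longrightarrow> ph1_step l st (mv q v st)"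

inductive ph2_step :: "nat \<Rightarrow> ('q,'v) state \<Rightarrow> ('q,'v) state \<Rightarrow> bool \<Rightarrow> bool" for l where
  ph2_fat: "\<lbrakk> alive_val l st v; \<forall>u. alive_val l st u \<longrightarrow> count (res st) v \<le> count (res st) u;
     alive_grp l st q; count (grp st q) v > 0; fat l (grp st q);
     moves l st [(q,v)] st' b \<rbrakk> \<Longrightarrow> ph2_step l st st' b"
| ph2_thin: "\<lbrakk> alive_val l st v; \<forall>u. alive_val l st u \<longrightarrow> count (res st) v \<le> count (res st) u;
     alive_grp l st q; count (grp st q) v > 0; thin l (grp st q);
     pillar_list (grp st q) ps; moves l st (map (Pair q) ps) st' b \<rbrakk> \<Longrightarrow> ph2_step l st st' b"

text \<open>Step 1 selection loop: select st P S S' -- starting with current P and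
  accumulated S, the loop ends with S'.\<close>
inductive select :: "('q,'v) state \<Rightarrow> 'v set \<Rightarrow> 'q set \<Rightarrow> 'q set \<Rightarrow> bool" for st where
  sel_done: "select st {} S S"
| sel_pick: "\<lbrakk> P \<noteq> {}; q \<in> groups st;
     \<forall>q' \<in> groups st. card (cpill (grp st q) (res st) \<inter> P) \<le> card (cpill (grp st q') (res st) \<inter> P);
     select st (P \<inter> cpill (grp st q) (res st)) (insert q S) S' \<rbrakk>
     \<Longrightarrow> select st P S S'"

definition step1_moves :: "('q,'v) state \<Rightarrow> 'q set \<Rightarrow> ('q \<times> 'v) list \<Rightarrow> bool" where
  "step1_moves st S ms \<longleftrightarrow> (\<exists>qs ps. distinct qs \<and> set qs = S \<and>
      (\<forall>q \<in> S. pillar_list (grp st q) (ps q)) \<and>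
      ms = concat (map (\<lambda>q. map (Pair q) (ps q)) qs))"

text \<open>Step 2 processing of a single group q: repeat until q is dead.\<close>
inductive proc :: "nat \<Rightarrow> 'q \<Rightarrow> ('q,'v) state \<Rightarrow> ('q,'v) state \<Rightarrow> bool \<Rightarrow> bool" for l q where
  proc_dead: "dead l (grp st q) (res st) \<Longrightarrow> proc l q st st False"
| proc_fat_stop: "\<lbrakk> \<not> dead l (grp st q) (res st); fat l (grp st q);
     v \<in># grp st q; v \<notin> pillars (res st); moves l st [(q,v)] st' True \<rbrakk>
     \<Longrightarrow> proc l q st st' True"
| proc_fat_cont: "\<lbrakk> \<not> dead l (grp st q) (res st); fat l (grp st q);
     v \<in># grp st q; v \<notin> pillars (res st); moves l st [(q,v)] st1 False;
     proc l q st1 st' b \<rbrakk>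
     \<Longrightarrow> proc l q st st' b"
| proc_thin_stop: "\<lbrakk> thin l (grp st q); \<not> conflicting (grp st q) (res st);
     pillar_list (grp st q) ps; moves l st (map (Pair q) ps) st' True \<rbrakk>
     \<Longrightarrow> proc l q st st' True"
| proc_thin_cont: "\<lbrakk> thin l (grp st q); \<not> conflicting (grp st q) (res st);
     pillar_list (grp st q) ps; moves l st (map (Pair q) ps) st1 False;
     proc l q st1 st' b \<rbrakk>
     \<Longrightarrow> proc l q st st' b"

inductive proc_list :: "nat \<Rightarrow> 'q list \<Rightarrow> ('q,'v) state \<Rightarrow> ('q,'v) state \<Rightarrow> bool \<Rightarrow> bool" for l where
  pl_nil: "proc_list l [] st st False"
| pl_stop: "proc l q st st' True \<Longrightarrow> proc_list l (q # qs) st st' True"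
| pl_cont: "\<lbrakk> proc l q st st1 False; proc_list l qs st1 st' b \<rbrakk>
     \<Longrightarrow> proc_list l (q # qs) st st' b"

text \<open>One round of Phase Three: from st to st'; the flag says whether the algorithm
  terminated during the round.\<close>
inductive round :: "nat \<Rightarrow> ('q,'v) state \<Rightarrow> ('q,'v) state \<Rightarrow> bool \<Rightarrow> bool" for l where
  round_stop1: "\<lbrakk> select st (pillars (res st)) {} S; step1_moves st S ms;
     moves l st ms st' True \<rbrakk> \<Longrightarrow> round l st st' True"
| round_full: "\<lbrakk> select st (pillars (res st)) {} S; step1_moves st S ms;
     moves l st ms st1 False;
     distinct gs; set gs = {q. alive_grp l st1 q};
     proc_list l gs st1 st' b \<rbrakk> \<Longrightarrow> round l st st' b"

inductive p3_start :: "nat \<Rightarrow> ('q \<times> 'v) multiset \<Rightarrow> ('q,'v) state \<Rightarrow> bool" for l T where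
  p3_first: "\<lbrakk> (ph1_step l)\<^sup>*\<^sup>* (init_state T) st1; \<forall>q. eligible l (grp st1 q);
     \<not> eligible l (res st1);
     (\<lambda>s s'. ph2_step l s s' False)\<^sup>*\<^sup>* st1 st2;
     \<forall>v. \<not> alive_val l st2 v \<rbrakk> \<Longrightarrow> p3_start l T st2"
| p3_next: "\<lbrakk> p3_start l T st; round l st st' False \<rbrakk> \<Longrightarrow> p3_start l T st'"

end

theory Submission
  imports Defs
begin

text \<open>A round starts with a non-eligible residue R, so the set P of pillars of R has fewer than
  l elements. Step 1 selects at most |P| groups, since each selection strictly shrinks the
  current P: if the chosen group had all of P among its conflicting pillars, then by
  minimality every group would, and the selection loop could never end. Every pillar of R
  is missed by some selected group and so gains at most |P| - 1 \<le> l - 2 tuples; any other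
  value starts below h(R) and gains at most |P| \<le> l - 1. Step 2 never raises h(R), as it
  only adds single tuples of values that are not pillars of R.\<close>

lemma finite_range_count: "finite (range (count Q))"
proof -
  have "range (count Q) \<subseteq> insert 0 (count Q ` set_mset Q)"
    by (auto simp: image_iff)
  then show ?thesis by (rule finite_subset) simp
qed

lemma count_le_hgt: "count Q v \<le> hgt Q"
  unfolding hgt_def using finite_range_count by (intro Max_ge) auto

lemma ex_count_eq_hgt: "\<exists>v. count Q v = hgt Q"
proof -
  have "hgt Q \<in> range (count Q)"
    unfolding hgt_def using finite_range_count by (intro Max_in) auto
  then show ?thesis by auto
qed

lemma hgt_leI: "(\<And>v. count Q v \<le> k) \<Longrightarrow> hgt Q \<le> k"
  using ex_count_eq_hgt by metis

lemma pillars_subset_set_mset: "0 < hgt Q \<Longrightarrow> pillars Q \<subseteq> set_mset Q"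
  by (auto simp: pillars_def simp flip: count_greater_zero_iff)

lemma card_pillars_mult_hgt_le_size: "card (pillars Q) * hgt Q \<le> size Q"
proof (cases "hgt Q = 0")
  case False
  then have sub: "pillars Q \<subseteq> set_mset Q" by (simp add: pillars_subset_set_mset)
  have "card (pillars Q) * hgt Q = (\<Sum>v\<in>pillars Q. count Q v)"
    by (simp add: pillars_def)
  also have "\<dots> \<le> (\<Sum>v\<in>set_mset Q. count Q v)"
    using sub by (intro sum_mono2) auto
  also have "\<dots> = size Q" by (simp add: size_multiset_overloaded_eq)
  finally show ?thesis .
qed simp

lemma pillars_of_not_eligible:
  assumes "\<not> eligible l Q"
  shows "0 < hgt Q" "finite (pillars Q)" "pillars Q \<noteq> {}" "card (pillars Q) < l"
proof -
  show pos: "0 < hgt Q"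
    using assms by (rule_tac ccontr) (simp add: eligible_def)
  then show "finite (pillars Q)"
    by (rule finite_subset[OF pillars_subset_set_mset]) simp
  show "pillars Q \<noteq> {}"
    using ex_count_eq_hgt[of Q] by (auto simp: pillars_def)
  have "card (pillars Q) * hgt Q < l * hgt Q"
    using card_pillars_mult_hgt_le_size[of Q] assms unfolding eligible_def by linarith
  then show "card (pillars Q) < l" by simp
qed

lemma hgt_le_add_distinct_nonpillars:
  assumes "R' \<subseteq># R + M" and "\<And>u. u \<in># M \<Longrightarrow> count M u = 1 \<and> u \<notin> pillars R"
  shows "hgt R' \<le> hgt R"
proof (rule hgt_leI)
  fix u
  have "count R' u \<le> count R u + count M u"
    using mset_subset_eq_count[OF assms(1), of u] by simp
  moreover have "count R u \<le> hgt R" by (rule count_le_hgt)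
  moreover have "u \<in># M \<Longrightarrow> count R u < hgt R \<and> count M u = 1"
    using assms(2)[of u] count_le_hgt[of R u] by (auto simp: pillars_def)
  ultimately show "count R' u \<le> hgt R"
    by (cases "u \<in># M") (auto simp: not_in_iff)
qed

lemma count_mset_concat_distinct:
  assumes "distinct qs" and "\<And>q. q \<in> set qs \<Longrightarrow> distinct (f q)"
  shows "count (mset (concat (map f qs))) v = card {q \<in> set qs. v \<in> set (f q)}"
proof -
  have "count (mset (concat (map f qs))) v = (\<Sum>q\<in>set qs. count (mset (f q)) v)"
    using assms(1) by (simp add: mset_concat sum_list_distinct_conv_sum_set count_sum comp_def)
  also have "\<dots> = (\<Sum>q\<in>set qs. if v \<in> set (f q) then 1 else 0)"
    using assms(2) by (intro sum.cong) (auto simp: distinct_count_atmost_1)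
  finally show ?thesis by (simp add: sum.If_cases Int_def)
qed

lemma res_moves_subseteq: "moves l st ms st' b \<Longrightarrow> res st' \<subseteq># res st + mset (map snd ms)"
proof (induction rule: moves.induct)
  case (moves_stop v st q ms)
  then show ?case by (auto simp: mv_def res_def)
next
  case (moves_cont v st q ms st' b)
  then show ?case by (auto simp: mv_def res_def add.assoc subset_mset.order_trans)
qed simp

lemma moves_not_eligible:
  "moves l st ms st' False \<Longrightarrow> \<not> eligible l (res st) \<Longrightarrow> \<not> eligible l (res st')"
  by (induction st ms st' "False" rule: moves.induct) auto

lemma ph2_steps_not_eligible:
  "(\<lambda>s s'. ph2_step l s s' False)\<^sup>*\<^sup>* st st' \<Longrightarrow> \<not> eligible l (res st) \<Longrightarrow> \<not> eligible l (res st')"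
  by (induction rule: rtranclp_induct) (auto elim!: ph2_step.cases dest: moves_not_eligible)

lemma proc_not_eligible:
  "proc l q st st' False \<Longrightarrow> \<not> eligible l (res st) \<Longrightarrow> \<not> eligible l (res st')"
  by (induction st st' "False" rule: proc.induct) (auto dest: moves_not_eligible)

lemma proc_list_not_eligible:
  "proc_list l qs st st' False \<Longrightarrow> \<not> eligible l (res st) \<Longrightarrow> \<not> eligible l (res st')"
  by (induction qs st st' "False" rule: proc_list.induct) (auto dest: proc_not_eligible)

lemma round_not_eligible:
  "round l st st' False \<Longrightarrow> \<not> eligible l (res st) \<Longrightarrow> \<not> eligible l (res st')"
  by (auto elim!: round.cases dest: moves_not_eligible proc_list_not_eligible)

lemma p3_start_not_eligible: "p3_start l T st \<Longrightarrow> \<not> eligible l (res st)"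
  by (induction rule: p3_start.induct) (auto dest: ph2_steps_not_eligible round_not_eligible)

lemma select_mono: "select st P S S' \<Longrightarrow> S \<subseteq> S'"
  by (induction rule: select.induct) auto

lemma select_not_covered:
  "select st P S S' \<Longrightarrow> P \<noteq> {} \<Longrightarrow> \<exists>q\<in>groups st. \<not> P \<subseteq> cpill (grp st q) (res st)"
  by (induction rule: select.induct) (auto simp: Int_absorb2)

lemma select_card_le:
  "select st P S S' \<Longrightarrow> finite P \<Longrightarrow> finite S \<Longrightarrow> finite S' \<and> card S' \<le> card S + card P"
proof (induction rule: select.induct)
  case (sel_pick P q S S')
  let ?C = "\<lambda>q. cpill (grp st q) (res st)"
  have "\<not> P \<subseteq> ?C q"
  proof
    assume "P \<subseteq> ?C q"
    then have "P \<subseteq> ?C q'" if "q' \<in> groups st" for q'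
      using sel_pick.hyps(3) that sel_pick.prems(1)
      by (metis Int_absorb1 Int_commute Int_lower1 card_seteq)
    moreover obtain q' where "q' \<in> groups st" "\<not> P \<subseteq> ?C q'"
      using select_not_covered[OF sel_pick.hyps(4)] \<open>P \<subseteq> ?C q\<close> sel_pick.hyps(1)
      by (metis Int_absorb2)
    ultimately show False by blast
  qed
  then have "card (P \<inter> ?C q) < card P"
    using sel_pick.prems(1) by (meson Int_lower1 card_seteq le_less_linear le_iff_inf)
  moreover have "card (insert q S) \<le> card S + 1"
    using sel_pick.prems(2) by (simp add: card_insert_if)
  ultimately show ?case
    using sel_pick.IH sel_pick.prems by fastforce
qed simp

lemma select_misses:
  "select st P S S' \<Longrightarrow> v \<in> P \<Longrightarrow> \<exists>q\<in>S'. v \<notin> cpill (grp st q) (res st)"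
proof (induction rule: select.induct)
  case (sel_pick P q S S')
  then show ?case
    using select_mono[OF sel_pick.hyps(4)] by (cases "v \<in> cpill (grp st q) (res st)") auto
qed simp

lemma count_step1_moves:
  assumes "step1_moves st S ms"
  shows "count (mset (map snd ms)) v = card {q \<in> S. v \<in> pillars (grp st q)}"
proof -
  obtain qs ps where qs: "distinct qs" "set qs = S"
    and pl: "\<forall>q\<in>S. pillar_list (grp st q) (ps q)"
    and ms: "ms = concat (map (\<lambda>q. map (Pair q) (ps q)) qs)"
    using assms unfolding step1_moves_def by blast
  have "map snd ms = concat (map ps qs)"
    by (simp add: ms map_concat comp_def)
  then have "count (mset (map snd ms)) v = card {q \<in> set qs. v \<in> set (ps q)}"
    using count_mset_concat_distinct[of qs ps v] qs pl by (simp add: pillar_list_def)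
  also have "{q \<in> set qs. v \<in> set (ps q)} = {q \<in> S. v \<in> pillars (grp st q)}"
    using qs pl by (auto simp: pillar_list_def)
  finally show ?thesis .
qed

lemma step1_hgt_le:
  assumes ne: "\<not> eligible l (res st)"
    and sel: "select st (pillars (res st)) {} S"
    and s1: "step1_moves st S ms"
    and mv: "moves l st ms st1 b"
  shows "hgt (res st1) + 2 \<le> hgt (res st) + l"
proof -
  let ?R = "res st" and ?P = "pillars (res st)"
  let ?hits = "\<lambda>v. {q \<in> S. v \<in> pillars (grp st q)}"
  have finP: "finite ?P" and cP: "card ?P < l" and "?P \<noteq> {}"
    using pillars_of_not_eligible[OF ne] by auto
  then have "0 < card ?P" by (simp add: card_gt_0_iff)
  with cP have l2: "2 \<le> l" by linarith
  have finS: "finite S" and cS: "card S \<le> card ?P"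
    using select_card_le[OF sel finP] by auto
  have "count (res st1) v \<le> hgt ?R + l - 2" for v
  proof -
    have gain: "count (res st1) v \<le> count ?R v + card (?hits v)"
      using mset_subset_eq_count[OF res_moves_subseteq[OF mv], of v] count_step1_moves[OF s1, of v]
      by simp
    show ?thesis
    proof (cases "v \<in> ?P")
      case True
      then obtain q where "q \<in> S" "v \<notin> cpill (grp st q) ?R"
        using select_misses[OF sel] by blast
      with True have "?hits v \<subset> S" by (auto simp: cpill_def)
      then have "card (?hits v) < card S" by (rule psubset_card_mono[OF finS])
      moreover have "count ?R v = hgt ?R" using True by (simp add: pillars_def)
      ultimately show ?thesis using gain cS cP by linarith
    next
      case False
      then have "count ?R v < hgt ?R"
        using count_le_hgt[of ?R v] by (auto simp: pillars_def)
      moreover have "card (?hits v) \<le> card S"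
        using finS by (intro card_mono) auto
      ultimately show ?thesis using gain cS cP by linarith
    qed
  qed
  then have "hgt (res st1) \<le> hgt ?R + l - 2" by (rule hgt_leI)
  then show ?thesis using l2 by linarith
qed

lemma moves_distinct_nonpillars_hgt_le:
  assumes "moves l st (map (Pair q) ps) st' b" and "distinct ps"
    and "set ps \<inter> pillars (res st) = {}"
  shows "hgt (res st') \<le> hgt (res st)"
  using res_moves_subseteq[OF assms(1)] assms(2,3)
  by (intro hgt_le_add_distinct_nonpillars[where M = "mset ps"])
     (auto simp: comp_def distinct_count_atmost_1)

lemma proc_hgt_le: "proc l q st st' b \<Longrightarrow> hgt (res st') \<le> hgt (res st)"
proof (induction rule: proc.induct)
  case (proc_fat_stop st v st')
  then show ?case by (intro moves_distinct_nonpillars_hgt_le[where ps = "[v]"]) auto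
next
  case (proc_fat_cont st v st1 st' b)
  then have "hgt (res st1) \<le> hgt (res st)"
    by (intro moves_distinct_nonpillars_hgt_le[where ps = "[v]"]) auto
  then show ?case using proc_fat_cont.IH by simp
next
  case (proc_thin_stop st ps st')
  then show ?case
    by (intro moves_distinct_nonpillars_hgt_le)
       (auto simp: pillar_list_def conflicting_def cpill_def)
next
  case (proc_thin_cont st ps st1 st' b)
  then have "hgt (res st1) \<le> hgt (res st)"
    by (intro moves_distinct_nonpillars_hgt_le)
       (auto simp: pillar_list_def conflicting_def cpill_def)
  then show ?case using proc_thin_cont.IH by simp
qed simp

lemma proc_list_hgt_le: "proc_list l qs st st' b \<Longrightarrow> hgt (res st') \<le> hgt (res st)"
  by (induction rule: proc_list.induct) (auto dest: proc_hgt_le)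

theorem lemma8:
  fixes T :: "('q \<times> 'v) multiset" and l :: nat
  assumes "eligible l (image_mset snd T)"
    and "p3_start l T st"
    and "round l st st' b"
  shows "int (hgt (res st')) \<le> int (hgt (res st)) + int l - 2"
proof -
  have ne: "\<not> eligible l (res st)" using p3_start_not_eligible[OF assms(2)] .
  have "hgt (res st') + 2 \<le> hgt (res st) + l"
    using assms(3)
  proof (cases rule: round.cases)
    case (round_stop1 S ms)
    then show ?thesis using step1_hgt_le[OF ne] by blast
  next
    case (round_full S ms st1 gs)
    then have "hgt (res st1) + 2 \<le> hgt (res st) + l" using step1_hgt_le[OF ne] by blast
    moreover have "hgt (res st') \<le> hgt (res st1)" using proc_list_hgt_le round_full by blast
    ultimately show ?thesis by linarith
  qed
  then show ?thesis by linarith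
qed

end
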